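(* Let $\gamma>0$, $t>0$, let $M$ be a positive integer, and set $\alpha = 1+1/\gamma$. Let $X$ be a random variable with the bounded continuous power-law distribution with exponent $-\alpha$ on the domain $\bigl(1, (\tfrac{t}{t+M+1})^{-\gamma}\bigr)$, i.e. with density proportional to $x^{-\alpha}$ on that interval and $0$ elsewhere. Then: (1) The $(M+1)$-quantiles of $X$ (the $M$ points dividing its distribution into $M+1$ parts of equal probability) are, up to a common positive constant factor (independent of $k$), the numbers $(t+1)^{-\gamma}, (t+2)^{-\gamma}, \dots, (t+M)^{-\gamma}$. (2) Let $\mathbf{F}=(F_1,\dots,F_M)$ be observed frequencies (positive integers) with maximum $F_{\max}=F_1>1$, modeled as $M$ independent draws from the distribution of $X$. With $\gamma$ (hence $\alpha$) and $M$ fixed, the value of $t>0$ that maximizes the likelihood of observing $\mathbf{F}$ is $$t = \frac{M+1}{F_{\max}^{1/\gamma}-1}.$$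
   Context: Setting: one has a data set of $M$ distinct items (error message types) with observed occurrence counts $F_1\ge F_2\ge\dots\ge F_M\ge 1$, where $F_{\max}:=F_1$ is the largest count. A Zipf–Mandelbrot distribution with parameters $\gamma$ and $t$ assigns to the $k$-th most common item a frequency proportional to $(k+t)^{-\gamma}$. In part (2), the observed frequency vector $\mathbf{F}$ is treated as an unordered sample of $M$ values from the continuous distribution of $X$, and the likelihood is the product of the densities of $X$ at $F_1,\dots,F_M$ (which is zero if some $F_k$ lies outside the domain of $X$). *)

theory Defs
  imports "HOL-Probability.Probability"
begin

definition pl_upper :: "real \<Rightarrow> real \<Rightarrow> nat \<Rightarrow> real" where
  "pl_upper \<gamma> t M = (t / (t + real M + 1)) powr (-\<gamma>)"

definition pl_density :: "real \<Rightarrow> real \<Rightarrow> nat \<Rightarrow> real \<Rightarrow> real" where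
  "pl_density \<gamma> t M x =
     (if 1 \<le> x \<and> x \<le> pl_upper \<gamma> t M
      then x powr (-(1 + 1/\<gamma>)) / integral {1 .. pl_upper \<gamma> t M} (\<lambda>s. s powr (-(1 + 1/\<gamma>)))
      else 0)"

definition pl_dist :: "real \<Rightarrow> real \<Rightarrow> nat \<Rightarrow> real measure" where
  "pl_dist \<gamma> t M = density lborel (\<lambda>x. ennreal (pl_density \<gamma> t M x))"

definition pl_quantiles :: "real \<Rightarrow> real \<Rightarrow> nat \<Rightarrow> real set" where
  "pl_quantiles \<gamma> t M =
     {q. \<exists>j\<in>{1..M}. measure (pl_dist \<gamma> t M) {..q} = real j / (real M + 1)}"

definition pl_likelihood :: "real \<Rightarrow> real \<Rightarrow> nat \<Rightarrow> (nat \<Rightarrow> nat) \<Rightarrow> real" where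
  "pl_likelihood \<gamma> t M F = (\<Prod>i\<in>{1..M}. pl_density \<gamma> t M (real (F i)))"

end

theory Submission
  imports Defs
begin

text \<open>Write S = t + M + 1, so that the upper end of the domain is U = (S/t) powr \<gamma>.
  Integrating x powr -\<alpha> gives P(X \<le> q) = S (1 - q powr (-1/\<gamma>)) / (M + 1) for q in [1, U];
  hence P(X \<le> q) = j/(M + 1) exactly when q powr (-1/\<gamma>) = (t + k)/S with k = M + 1 - j,
  i.e. q = S powr \<gamma> * (t + k) powr -\<gamma>.
  The normalising constant of the density is \<gamma> (M + 1)/S, so as long as every observation lies in
  the domain, i.e. F_max \<le> U, the likelihood is (S/(\<gamma> (M + 1)))^M times a factor independent of t,
  which is strictly increasing in t. Since U decreases in t, F_max \<le> U holds exactly for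
  t \<le> (M + 1)/(F_max powr (1/\<gamma>) - 1), and beyond that the likelihood vanishes.\<close>

lemma has_integral_powr_neg_one_minus_inverse:
  fixes g a b :: real
  assumes g: "g > 0" and a: "0 < a" and ab: "a \<le> b"
  shows "((\<lambda>s. s powr (-(1 + 1/g))) has_integral g * (a powr (-1/g) - b powr (-1/g))) {a..b}"
proof -
  have "((\<lambda>s. s powr (-(1 + 1/g))) has_integral
          (- g * b powr (-1/g)) - (- g * a powr (-1/g))) {a..b}"
  proof (rule fundamental_theorem_of_calculus_interior_strong[where S="{}"])
    show "continuous_on {a..b} (\<lambda>s. - g * s powr (-1/g))"
      using a by (intro continuous_intros) auto
    fix x :: real assume x: "x \<in> {a<..<b} - {}"
    have "((\<lambda>s. - g * s powr (-1/g)) has_real_derivative - g * ((-1/g) * x powr (-1/g - 1))) (at x)"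
      using x a by (intro DERIV_cmult has_real_derivative_powr) auto
    moreover have "- g * ((-1/g) * x powr (-1/g - 1)) = x powr (-(1 + 1/g))"
    proof -
      have exponent: "-1/g - 1 = -(1 + 1/g)" by simp
      have "- g * ((-1/g) * x powr (-1/g - 1)) = x powr (-1/g - 1)" using g by simp
      then show ?thesis unfolding exponent .
    qed
    ultimately show "((\<lambda>s. - g * s powr (-1/g)) has_vector_derivative x powr (-(1 + 1/g))) (at x)"
      by (simp add: has_real_derivative_iff_has_vector_derivative)
  qed (use ab in auto)
  then show ?thesis by (simp add: algebra_simps)
qed

lemma pl_upper_eq:
  assumes "g > 0" and "t > 0"
  shows "pl_upper g t M = ((t + real M + 1) / t) powr g"
  using assms by (simp add: pl_upper_def powr_minus_divide powr_divide)

lemma one_le_pl_upper: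
  assumes "g > 0" and "t > 0"
  shows "1 \<le> pl_upper g t M"
  unfolding pl_upper_eq[OF assms] using assms by (intro ge_one_powr_ge_zero) auto

lemma pl_upper_powr_neg_inverse:
  assumes "g > 0" and "t > 0"
  shows "pl_upper g t M powr (-1/g) = t / (t + real M + 1)"
  using assms by (simp add: pl_upper_def powr_powr)

lemma pl_upper_ge_iff:
  assumes g: "g > 0" and t: "t > 0" and f: "f > 1"
  shows "f \<le> pl_upper g t M \<longleftrightarrow> t \<le> (real M + 1) / (f powr (1/g) - 1)"
proof -
  define p where "p = f powr (1/g)"
  have p: "p > 1" unfolding p_def using f g by simp
  have "f \<le> pl_upper g t M \<longleftrightarrow> p powr g \<le> ((t + real M + 1) / t) powr g"
    unfolding pl_upper_eq[OF g t] p_def using f g by (simp add: powr_powr)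
  also have "\<dots> \<longleftrightarrow> p \<le> (t + real M + 1) / t"
  proof
    assume "p powr g \<le> ((t + real M + 1) / t) powr g"
    then show "p \<le> (t + real M + 1) / t"
      using g t powr_less_mono2[of g "(t + real M + 1) / t" p] by fastforce
  qed (use g p in \<open>intro powr_mono2; auto\<close>)
  also have "\<dots> \<longleftrightarrow> t \<le> (real M + 1) / (p - 1)"
    using t p by (simp add: field_simps)
  finally show ?thesis unfolding p_def .
qed

lemma integral_pl_normaliser:
  assumes g: "g > 0" and t: "t > 0"
  shows "integral {1 .. pl_upper g t M} (\<lambda>s. s powr (-(1 + 1/g)))
           = g * (real M + 1) / (t + real M + 1)"
proof -
  have "integral {1 .. pl_upper g t M} (\<lambda>s. s powr (-(1 + 1/g))) = g * (1 - t / (t + real M + 1))"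
    using has_integral_powr_neg_one_minus_inverse[OF g _ one_le_pl_upper[OF g t]]
          pl_upper_powr_neg_inverse[OF g t] by (simp add: integral_unique)
  also have "\<dots> = g * (real M + 1) / (t + real M + 1)"
    using t by (simp add: field_simps)
  finally show ?thesis .
qed

lemma pl_density_eq:
  assumes "g > 0" and "t > 0"
  shows "pl_density g t M x = (if 1 \<le> x \<and> x \<le> pl_upper g t M
           then x powr (-(1 + 1/g)) * ((t + real M + 1) / (g * (real M + 1))) else 0)"
  unfolding pl_density_def integral_pl_normaliser[OF assms] by simp

lemma emeasure_pl_dist:
  assumes "g > 0" and "t > 0" and A: "A \<in> sets borel"
  shows "emeasure (pl_dist g t M) A = (\<integral>\<^sup>+ x. ennreal (pl_density g t M x) * indicator A x \<partial>lborel)"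
proof -
  have "(\<lambda>x. ennreal (pl_density g t M x)) \<in> borel_measurable borel"
    unfolding pl_density_eq[OF assms(1,2)] by measurable
  then show ?thesis
    unfolding pl_dist_def using A by (intro emeasure_density) auto
qed

lemma measure_pl_dist_atMost_below_one:
  assumes "g > 0" and "t > 0" and "q < 1"
  shows "measure (pl_dist g t M) {..q} = 0"
proof -
  have "emeasure (pl_dist g t M) {..q} = (\<integral>\<^sup>+ (x::real). 0 \<partial>lborel)"
    unfolding emeasure_pl_dist[OF assms(1,2) atMost_borel]
    using assms(3) by (intro nn_integral_cong) (auto simp: pl_density_def indicator_def)
  then show ?thesis by (simp add: measure_def)
qed

lemma measure_pl_dist_atMost:
  assumes g: "g > 0" and t: "t > 0" and q: "1 \<le> q"
  shows "measure (pl_dist g t M) {..q}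
           = (t + real M + 1) * (1 - min q (pl_upper g t M) powr (-1/g)) / (real M + 1)"
proof -
  define m where "m = min q (pl_upper g t M)"
  define K where "K = (t + real M + 1) / (g * (real M + 1))"
  have K: "K > 0" using g t by (simp add: K_def)
  have m: "1 \<le> m" using q one_le_pl_upper[OF g t] by (simp add: m_def)
  have "emeasure (pl_dist g t M) {..q}
          = (\<integral>\<^sup>+ x. ennreal (x powr (-(1 + 1/g)) * K) * indicator {1..m} x \<partial>lborel)"
    unfolding emeasure_pl_dist[OF g t atMost_borel]
    by (intro nn_integral_cong) (auto simp: pl_density_eq[OF g t] indicator_def m_def K_def)
  also have "\<dots> = ennreal (g * (1 - m powr (-1/g)) * K)"
    using K has_integral_mult_left[OF has_integral_powr_neg_one_minus_inverse[OF g _ m]]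
    by (intro nn_integral_has_integral_lebesgue') auto
  finally have "emeasure (pl_dist g t M) {..q} = ennreal (g * (1 - m powr (-1/g)) * K)" .
  moreover have "m powr (-1/g) \<le> 1" using powr_mono[of "-1/g" 0 m] m g by auto
  ultimately have "measure (pl_dist g t M) {..q} = g * (1 - m powr (-1/g)) * K"
    using g K by (simp add: measure_def)
  then show ?thesis using g by (simp add: K_def m_def)
qed

lemma measure_pl_dist_atMost_above_upper:
  assumes g: "g > 0" and t: "t > 0" and q: "pl_upper g t M \<le> q"
  shows "measure (pl_dist g t M) {..q} = 1"
proof -
  have "measure (pl_dist g t M) {..q}
          = (t + real M + 1) * (1 - t / (t + real M + 1)) / (real M + 1)"
    using measure_pl_dist_atMost[OF g t order_trans[OF one_le_pl_upper[OF g t] q], where M=M]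
          pl_upper_powr_neg_inverse[OF g t, where M=M] q
    by (simp add: min_absorb2)
  also have "\<dots> = 1"
  proof -
    have "(t + real M + 1) * (1 - t / (t + real M + 1)) = real M + 1"
      using t by (simp add: field_simps)
    then show ?thesis by simp
  qed
  finally show ?thesis .
qed

lemma pl_quantile_iff:
  assumes g: "g > 0" and t: "t > 0"
  shows "q \<in> pl_quantiles g t M \<longleftrightarrow>
           (\<exists>k\<in>{1..M}. q = ((t + real M + 1) / (t + real k)) powr g)"
proof
  define S where "S = t + real M + 1"
  assume "q \<in> pl_quantiles g t M"
  then obtain j where j: "j \<in> {1..M}" and cdf_q: "measure (pl_dist g t M) {..q} = real j / (real M + 1)"
    by (auto simp: pl_quantiles_def)
  have q: "1 \<le> q"
    using cdf_q j measure_pl_dist_atMost_below_one[OF g t, of q M] by (cases "1 \<le> q") auto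
  have "\<not> pl_upper g t M \<le> q"
    using cdf_q j measure_pl_dist_atMost_above_upper[OF g t, of M q] by auto
  then have "S * (1 - q powr (-1/g)) / (real M + 1) = real j / (real M + 1)"
    using cdf_q measure_pl_dist_atMost[OF g t q, where M=M] by (simp add: S_def)
  then have "S * (1 - q powr (-1/g)) = real j"
    by simp
  moreover have "S > 0" using t by (simp add: S_def)
  ultimately have "q powr (-1/g) = (S - real j) / S"
    by (simp add: field_simps)
  moreover have "S - real j = t + real (M + 1 - j)"
    using j by (simp add: S_def of_nat_diff)
  ultimately have q_root: "q powr (-1/g) = (t + real (M + 1 - j)) / S"
    by simp
  have "q = (q powr (-1/g)) powr (-g)" using q g by (simp add: powr_powr)
  also have "\<dots> = (S / (t + real (M + 1 - j))) powr g"
    unfolding q_root using t by (simp add: S_def powr_minus_divide powr_divide)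
  finally show "\<exists>k\<in>{1..M}. q = (S / (t + real k)) powr g"
    using j by (intro bexI[of _ "M + 1 - j"]) auto
next
  define S where "S = t + real M + 1"
  assume "\<exists>k\<in>{1..M}. q = ((t + real M + 1) / (t + real k)) powr g"
  then obtain k where k: "k \<in> {1..M}" and q_def: "q = (S / (t + real k)) powr g"
    by (auto simp: S_def)
  have q: "1 \<le> q"
    unfolding q_def using g k t by (intro ge_one_powr_ge_zero) (auto simp: S_def)
  have "q \<le> pl_upper g t M"
    unfolding q_def pl_upper_eq[OF g t] using g k t
    by (intro powr_mono2) (auto simp: S_def field_simps)
  moreover have "q powr (-1/g) = (t + real k) / S"
    unfolding q_def using g k t by (simp add: S_def powr_powr powr_minus_divide powr_divide)
  ultimately have "measure (pl_dist g t M) {..q} = (S - (t + real k)) / (real M + 1)"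
    using measure_pl_dist_atMost[OF g t q, where M=M] t by (simp add: S_def min_absorb1 field_simps)
  also have "\<dots> = real (M + 1 - k) / (real M + 1)"
    using k by (simp add: S_def of_nat_diff)
  finally show "q \<in> pl_quantiles g t M"
    using k unfolding pl_quantiles_def by (intro CollectI bexI[of _ "M + 1 - k"]) auto
qed

lemma pl_likelihood_eq:
  assumes g: "g > 0" and t: "t > 0" and M: "M > 0"
    and F: "\<forall>i\<in>{1..M}. 1 \<le> F i \<and> F i \<le> F 1" and F1: "F 1 > 1"
  shows "pl_likelihood g t M F =
           (if t \<le> (real M + 1) / (real (F 1) powr (1/g) - 1)
            then (\<Prod>i\<in>{1..M}. real (F i) powr (-(1 + 1/g))) * ((t + real M + 1) / (g * (real M + 1))) ^ M
            else 0)"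
proof -
  define K where "K = (t + real M + 1) / (g * (real M + 1))"
  have feasible: "real (F 1) \<le> pl_upper g t M \<longleftrightarrow> t \<le> (real M + 1) / (real (F 1) powr (1/g) - 1)"
    using pl_upper_ge_iff[OF g t] F1 by simp
  show ?thesis
  proof (cases "real (F 1) \<le> pl_upper g t M")
    case True
    have "pl_likelihood g t M F = (\<Prod>i\<in>{1..M}. real (F i) powr (-(1 + 1/g)) * K)"
      unfolding pl_likelihood_def
    proof (rule prod.cong[OF refl])
      fix i assume "i \<in> {1..M}"
      then have "1 \<le> F i" "real (F i) \<le> real (F 1)" using F by auto
      then have "1 \<le> real (F i) \<and> real (F i) \<le> pl_upper g t M" using True by simp
      then show "pl_density g t M (real (F i)) = real (F i) powr (-(1 + 1/g)) * K"
        unfolding pl_density_eq[OF g t] K_def by simp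
    qed
    also have "\<dots> = (\<Prod>i\<in>{1..M}. real (F i) powr (-(1 + 1/g))) * K ^ M"
      by (simp add: prod.distrib)
    finally show ?thesis using True feasible unfolding K_def by simp
  next
    case False
    have "pl_likelihood g t M F = 0"
      unfolding pl_likelihood_def using False M
      by (intro prod_zero bexI[of _ 1]) (auto simp: pl_density_def)
    then show ?thesis using False feasible by simp
  qed
qed

lemma pl_likelihood_unique_max:
  assumes g: "g > 0" and M: "M > 0"
    and F: "\<forall>i\<in>{1..M}. 1 \<le> F i \<and> F i \<le> F 1" and F1: "F 1 > 1"
    and t0_eq: "t0 = (real M + 1) / (real (F 1) powr (1/g) - 1)"
    and t: "t > 0" "t \<noteq> t0"
  shows "pl_likelihood g t M F < pl_likelihood g t0 M F"
proof -
  define P where "P = (\<Prod>i\<in>{1..M}. real (F i) powr (-(1 + 1/g)))"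
  define K where "K = (\<lambda>t. (t + real M + 1) / (g * (real M + 1)))"
  have "real (F 1) powr (1/g) > 1" using F1 g by simp
  then have t0_pos: "t0 > 0" by (simp add: t0_eq)
  have P: "P > 0" unfolding P_def
  proof (rule prod_pos)
    fix i assume "i \<in> {1..M}"
    then have "1 \<le> F i" using F by blast
    then show "real (F i) powr (-(1 + 1/g)) > 0" by simp
  qed
  have likelihood: "\<And>t. t > 0 \<Longrightarrow> pl_likelihood g t M F = (if t \<le> t0 then P * K t ^ M else 0)"
    using pl_likelihood_eq[OF g _ M F F1] unfolding t0_eq P_def K_def by blast
  show ?thesis
  proof (cases "t \<le> t0")
    case True
    then have "K t < K t0" using t g by (simp add: K_def divide_strict_right_mono)
    then have "K t ^ M < K t0 ^ M" using t g M by (intro power_strict_mono) (auto simp: K_def)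
    then show ?thesis using likelihood[OF t(1)] likelihood[OF t0_pos] True P by simp
  next
    case False
    then show ?thesis using likelihood[OF t(1)] likelihood[OF t0_pos] P t0_pos g by (simp add: K_def)
  qed
qed

theorem proposition2:
  fixes \<gamma> :: real and M :: nat
  assumes "\<gamma> > 0" and "M > 0"
  shows "(\<forall>t>0. \<exists>C>0. pl_quantiles \<gamma> t M = {C * (t + real k) powr (-\<gamma>) | k. k \<in> {1..M}})
       \<and> (\<forall>F :: nat \<Rightarrow> nat.
            (\<forall>i\<in>{1..M}. 1 \<le> F i) \<and> (\<forall>i\<in>{1..M}. \<forall>j\<in>{1..M}. i \<le> j \<longrightarrow> F j \<le> F i)
            \<and> F 1 > 1 \<longrightarrow>
            (let t0 = (real M + 1) / (real (F 1) powr (1 / \<gamma>) - 1) in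
               t0 > 0 \<and> (\<forall>t>0. t \<noteq> t0 \<longrightarrow> pl_likelihood \<gamma> t M F < pl_likelihood \<gamma> t0 M F)))"
proof (intro conjI allI impI)
  fix t :: real assume t: "t > 0"
  define C where "C = (t + real M + 1) powr \<gamma>"
  have "((t + real M + 1) / (t + real k)) powr \<gamma> = C * (t + real k) powr (-\<gamma>)" for k :: nat
    using t by (simp add: C_def powr_divide powr_minus_divide)
  then have "q \<in> pl_quantiles \<gamma> t M \<longleftrightarrow> (\<exists>k\<in>{1..M}. q = C * (t + real k) powr (-\<gamma>))" for q
    using pl_quantile_iff[OF assms(1) t] by simp
  then have "pl_quantiles \<gamma> t M = {C * (t + real k) powr (-\<gamma>) | k. k \<in> {1..M}}"
    unfolding set_eq_iff by blast
  moreover have "C > 0" using t by (simp add: C_def)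
  ultimately show "\<exists>C>0. pl_quantiles \<gamma> t M = {C * (t + real k) powr (-\<gamma>) | k. k \<in> {1..M}}"
    by blast
next
  fix F :: "nat \<Rightarrow> nat"
  assume "(\<forall>i\<in>{1..M}. 1 \<le> F i) \<and> (\<forall>i\<in>{1..M}. \<forall>j\<in>{1..M}. i \<le> j \<longrightarrow> F j \<le> F i) \<and> F 1 > 1"
  then have F: "\<forall>i\<in>{1..M}. 1 \<le> F i \<and> F i \<le> F 1" and F1: "F 1 > 1"
    using assms(2) by auto
  have "real (F 1) powr (1 / \<gamma>) > 1" using F1 assms(1) by simp
  then show "let t0 = (real M + 1) / (real (F 1) powr (1 / \<gamma>) - 1) in
               t0 > 0 \<and> (\<forall>t>0. t \<noteq> t0 \<longrightarrow> pl_likelihood \<gamma> t M F < pl_likelihood \<gamma> t0 M F)"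
    using pl_likelihood_unique_max[OF assms F F1 refl] by (simp add: Let_def)
qed

end
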